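(* Let $q\ge5$ be an integer coprime to $6$, let $\chi$ be a real primitive Dirichlet character modulo $q$, and let $\boldsymbol a=(a_0,a_1,a_2,a_3)$ be a vector of positive integers whose radicals divide $q$. Then $\Xi_{\boldsymbol a}$ vanishes unless $a_0=a_1=a_2=a_3$, in which case $$\Xi_{\boldsymbol a}=\mu(q)\phi(q)\prod_{p\|q}\big(p+1-\#E_{3b^2}(\mathbb{F}_p)\big),$$ where $b$ is the inverse of $2$ modulo $q$.
   Context: $\Xi_{\boldsymbol a}:=\sum\chi(b_0)\chi(b_1)\chi(b_2)\chi(b_3)$, the sum over residues $b_0,\dots,b_3$ mod $q$ for which there exist integers $n,d$ with $a_j\mid n+jd$ and $(n+jd)/a_j\equiv b_j\pmod q$ for all $0\le j\le3$. For a prime $p$ and $\lambda\in\mathbb{F}_p$, $E_\lambda/\mathbb{F}_p$ is the curve $y^2=x(x-1)(x-\lambda)$ and $\#E_\lambda(\mathbb{F}_p)$ counts its $\mathbb{F}_p$-points including the point at infinity. $\mathrm{rad}(n)=\prod_{p|n}p$; $\mu$ is Möbius, $\phi$ Euler's totient. *)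

theory Defs
  imports "HOL-Number_Theory.Number_Theory" "HOL-Library.FuncSet" "HOL-Computational_Algebra.Squarefree"
begin

definition dirichlet_character :: "nat \<Rightarrow> (int \<Rightarrow> complex) \<Rightarrow> bool" where
  "dirichlet_character q \<chi> \<longleftrightarrow> q > 0 \<and>
     (\<forall>n. \<chi> (n + int q) = \<chi> n) \<and>
     (\<forall>m n. \<chi> (m * n) = \<chi> m * \<chi> n) \<and>
     \<chi> 1 = 1 \<and>
     (\<forall>n. \<chi> n = 0 \<longleftrightarrow> \<not> coprime n (int q))"

text \<open>Primitive: not induced by any character of smaller modulus d dividing q.\<close>
definition primitive_character :: "nat \<Rightarrow> (int \<Rightarrow> complex) \<Rightarrow> bool" where
  "primitive_character q \<chi> \<longleftrightarrow> dirichlet_character q \<chi> \<and>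
     (\<forall>d. d dvd q \<and> d < q \<longrightarrow>
        \<not> (\<forall>n. coprime n (int q) \<and> [n = 1] (mod int d) \<longrightarrow> \<chi> n = 1))"

definition real_character :: "(int \<Rightarrow> complex) \<Rightarrow> bool" where
  "real_character \<chi> \<longleftrightarrow> (\<forall>n. \<chi> n \<in> \<real>)"

definition rad :: "nat \<Rightarrow> nat" where
  "rad n = (\<Prod>p\<in>prime_factors n. p)"

definition moebius :: "nat \<Rightarrow> int" where
  "moebius n = (if n = 0 then 0 else if squarefree n then (-1) ^ card (prime_factors n) else 0)"

definition Xi :: "(int \<Rightarrow> complex) \<Rightarrow> nat \<Rightarrow> (nat \<Rightarrow> nat) \<Rightarrow> complex" where
  "Xi \<chi> q a = (\<Sum>b \<in> {b \<in> {0..<4::nat} \<rightarrow>\<^sub>E {0..<int q}.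
        \<exists>n d :: int. \<forall>j<4. int (a j) dvd n + int j * d \<and>
                     [(n + int j * d) div int (a j) = b j] (mod int q)}.
      \<Prod>j<4. \<chi> (b j))"

text \<open>\<open>#E_\<lambda>(F_p)\<close> for \<open>y^2 = x(x-1)(x-\<lambda>)\<close>, including the point at infinity.\<close>
definition num_points_E :: "nat \<Rightarrow> int \<Rightarrow> nat" where
  "num_points_E p lam = card {(x, y) \<in> {0..<int p} \<times> {0..<int p}.
        [y ^ 2 = x * (x - 1) * (x - lam)] (mod int p)} + 1"

end

theory Submission
  imports Defs
begin

text \<open>
  Write \<open>b\<^sub>j\<close> for the residue of \<open>(n + j d)/a\<^sub>j\<close>. A real primitive character modulo an odd \<open>q\<close>
  forces \<open>q\<close> to be squarefree, and it is then the product of the Legendre symbols of the primes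
  dividing \<open>q\<close>.

  If the \<open>a\<^sub>j\<close> are not all equal, pick a prime \<open>p\<close> at which their valuations differ. When two
  valuations exceed a third one \<open>v = v\<^sub>p(a\<^sub>l)\<close>, \<open>p\<^bsup>v+1\<^esup>\<close> divides two terms of the progression
  \<open>n + j d\<close> whose indices differ by less than \<open>p\<close>, hence all of them, so \<open>p\<close> divides \<open>b\<^sub>l\<close> and
  \<open>\<chi>(b\<^sub>l) = 0\<close>. When one valuation is the strict maximum, shifting \<open>n\<close> by a suitable multiple
  moves that single \<open>b\<^sub>j\<close> through a complete progression modulo \<open>p\<close> with difference \<open>q/p\<close> times
  a unit, and such character sums vanish by primitivity.

  If all \<open>a\<^sub>j\<close> are equal, the realised tuples are the reductions of the progressions \<open>n + j d\<close>;
  substituting \<open>d = n t\<close> gives \<open>\<phi>(q) \<Sum>\<^sub>t \<chi>((1 + t)(1 + 2t)(1 + 3t))\<close>. By the Chinese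
  remainder theorem this factors over \<open>p | q\<close>, and \<open>x = 3b(1 + t)\<close> turns each local factor into
  \<open>\<Sum>\<^sub>x (x(x - 1)(x - 3b\<^sup>2) / p) = #E(\<bbbF>\<^sub>p) - p - 1\<close> for \<open>E = E\<^bsub>3b\<^sup>2\<^esub>\<close>.
\<close>

section \<open>Dirichlet characters\<close>

lemma primitive_character_imp_dirichlet_character:
  "primitive_character q \<chi> \<Longrightarrow> dirichlet_character q \<chi>"
  unfolding primitive_character_def by blast

lemma primitive_characterD:
  assumes "primitive_character q \<chi>" "d dvd q" "d < q"
  obtains n where "coprime n (int q)" "[n = 1] (mod int d)" "\<chi> n \<noteq> 1"
  using assms unfolding primitive_character_def by blast

context
  fixes q :: nat and \<chi> :: "int \<Rightarrow> complex"
  assumes dc: "dirichlet_character q \<chi>"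
begin

lemma dirichlet_character_modulus_pos: "q > 0"
  using dc unfolding dirichlet_character_def by blast

lemma dirichlet_character_mult: "\<chi> (m * n) = \<chi> m * \<chi> n"
  using dc unfolding dirichlet_character_def by blast

lemma dirichlet_character_one: "\<chi> 1 = 1"
  using dc unfolding dirichlet_character_def by blast

lemma dirichlet_character_eq_0_iff: "\<chi> n = 0 \<longleftrightarrow> \<not> coprime n (int q)"
  using dc unfolding dirichlet_character_def by blast

lemma dirichlet_character_add_mult_modulus: "\<chi> (x + k * int q) = \<chi> x"
proof -
  have step: "\<chi> (n + int q) = \<chi> n" for n
    using dc unfolding dirichlet_character_def by blast
  have nat_shift: "\<chi> (x + int j * int q) = \<chi> x" for x j
  proof (induction j)
    case (Suc j)
    then show ?case
      using step[of "x + int j * int q"] by (simp add: algebra_simps)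
  qed simp
  show ?thesis
  proof (cases "k \<ge> 0")
    case True
    then show ?thesis using nat_shift[of x "nat k"] by simp
  next
    case False
    then show ?thesis using nat_shift[of "x + k * int q" "nat (- k)"] by (simp add: algebra_simps)
  qed
qed

lemma dirichlet_character_mod: "\<chi> (x mod int q) = \<chi> x"
  using dirichlet_character_add_mult_modulus[of "x mod int q" "x div int q"] by simp

lemma dirichlet_character_cong: "[x = y] (mod int q) \<Longrightarrow> \<chi> x = \<chi> y"
  by (metis cong_def dirichlet_character_mod)

lemma dirichlet_character_power: "\<chi> (x ^ k) = \<chi> x ^ k"
  by (induction k) (simp_all add: dirichlet_character_one dirichlet_character_mult)

lemma dirichlet_character_prod: "\<chi> (\<Prod>i\<in>A. f i) = (\<Prod>i\<in>A. \<chi> (f i))"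
  by (induction A rule: infinite_finite_induct)
     (simp_all add: dirichlet_character_one dirichlet_character_mult)

lemma dirichlet_character_power_totient:
  assumes "coprime n (int q)"
  shows "\<chi> n ^ totient q = 1"
proof -
  have "coprime (int (nat (n mod int q))) (int q)"
    using assms dirichlet_character_modulus_pos by simp
  then have "[nat (n mod int q) ^ totient q = 1] (mod q)"
    by (intro euler_theorem) (simp only: coprime_int_iff)
  then have "[int (nat (n mod int q)) ^ totient q = 1] (mod int q)"
    by (metis cong_int_iff of_nat_1 of_nat_power)
  then have "[(n mod int q) ^ totient q = 1] (mod int q)"
    using dirichlet_character_modulus_pos by simp
  then have "[n ^ totient q = 1] (mod int q)"
    by (metis cong_def power_mod)
  then show ?thesis
    using dirichlet_character_cong dirichlet_character_power dirichlet_character_one by metis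
qed

lemma real_character_unit:
  assumes "real_character \<chi>" "coprime n (int q)"
  shows "\<chi> n = 1 \<or> \<chi> n = -1"
proof -
  obtain r where r: "\<chi> n = of_real r"
    using assms(1) unfolding real_character_def by (meson Reals_cases)
  have "totient q > 0"
    using dirichlet_character_modulus_pos by simp
  moreover have "\<bar>r\<bar> ^ totient q = 1"
    using dirichlet_character_power_totient[OF assms(2)] r
    by (metis of_real_eq_1_iff of_real_power power_abs abs_one)
  ultimately have "\<bar>r\<bar> = 1"
    by (metis abs_ge_zero power_eq_imp_eq_base power_one zero_le_one)
  then show ?thesis
    using r by (auto simp: abs_if split: if_splits)
qed

lemma real_character_QuadRes:
  assumes "real_character \<chi>" "coprime y (int q)" "QuadRes (int q) y"
  shows "\<chi> y = 1"
proof -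
  obtain r where r: "[r ^ 2 = y] (mod int q)"
    using assms(3) unfolding QuadRes_def by blast
  then have "coprime r (int q)"
    using assms(2) coprime_cong_cong_left[of "r ^ 2" y] by simp
  then have "\<chi> r ^ 2 = 1"
    using real_character_unit[OF assms(1)] by fastforce
  then show ?thesis
    using r dirichlet_character_cong dirichlet_character_power by metis
qed

end

section \<open>Sums of periodic functions over residue systems\<close>

lemma sum_periodic_affine_reindex:
  fixes h :: "int \<Rightarrow> 'a::comm_monoid_add" and m :: int
  assumes "m > 0" "\<And>x. h (x mod m) = h x" "coprime c m"
  shows "(\<Sum>k\<in>{0..<m}. h (b + c * k)) = (\<Sum>k\<in>{0..<m}. h k)"
proof -
  define g where "g k = (b + c * k) mod m" for k
  have inj: "inj_on g {0..<m}"
  proof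
    fix x y assume xy: "x \<in> {0..<m}" "y \<in> {0..<m}" "g x = g y"
    then have "[c * x = c * y] (mod m)"
      unfolding g_def cong_def by (simp add: cong_add_lcancel flip: cong_def)
    then have "[x = y] (mod m)"
      using cong_mult_lcancel[OF assms(3)] by blast
    then show "x = y"
      using xy cong_less_imp_eq_int by auto
  qed
  have "g ` {0..<m} = {0..<m}"
    by (rule card_subset_eq) (use assms(1) card_image[OF inj] in \<open>auto simp: g_def\<close>)
  then have "(\<Sum>k\<in>{0..<m}. h k) = (\<Sum>k\<in>{0..<m}. h (g k))"
    using sum.reindex[OF inj, of h] by simp
  also have "\<dots> = (\<Sum>k\<in>{0..<m}. h (b + c * k))"
    unfolding g_def using assms(2) by simp
  finally show ?thesis by simp
qed

lemma bij_betw_mixed_radix: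
  fixes m1 m2 :: int
  assumes "m1 > 0"
  shows "bij_betw (\<lambda>(x, y). x + m1 * y) ({0..<m1} \<times> {0..<m2}) {0..<m1 * m2}"
proof (rule bij_betw_byWitness[where f' = "\<lambda>t. (t mod m1, t div m1)"])
  show "(\<lambda>(x, y). x + m1 * y) ` ({0..<m1} \<times> {0..<m2}) \<subseteq> {0..<m1 * m2}"
  proof clarify
    fix x y :: int assume "x \<in> {0..<m1}" "y \<in> {0..<m2}"
    moreover have "m1 * y \<le> m1 * (m2 - 1)"
      using \<open>y \<in> {0..<m2}\<close> assms by (intro mult_left_mono) auto
    ultimately show "x + m1 * y \<in> {0..<m1 * m2}"
      using assms by (auto simp: algebra_simps)
  qed
  show "(\<lambda>t. (t mod m1, t div m1)) ` {0..<m1 * m2} \<subseteq> {0..<m1} \<times> {0..<m2}"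
  proof
    fix z assume "z \<in> (\<lambda>t. (t mod m1, t div m1)) ` {0..<m1 * m2}"
    then obtain t where z: "z = (t mod m1, t div m1)" and t: "t \<in> {0..<m1 * m2}"
      by auto
    have "t div m1 < m2"
    proof (rule ccontr)
      assume "\<not> t div m1 < m2"
      then have "m1 * m2 \<le> m1 * (t div m1)"
        using assms by (intro mult_left_mono) auto
      also have "\<dots> \<le> t"
        using assms t by (simp add: pos_mod_sign minus_mod_eq_mult_div [symmetric])
      finally show False
        using t by simp
    qed
    then show "z \<in> {0..<m1} \<times> {0..<m2}"
      using z t assms by (auto simp: pos_imp_zdiv_nonneg_iff)
  qed
qed (use assms in auto)

lemma sum_mult_modulus_split:
  fixes m1 m2 :: int and F :: "int \<Rightarrow> 'a::comm_monoid_add"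
  assumes "m1 > 0"
  shows "(\<Sum>t\<in>{0..<m1 * m2}. F t) = (\<Sum>x\<in>{0..<m1}. \<Sum>y\<in>{0..<m2}. F (x + m1 * y))"
  using sum.reindex_bij_betw[OF bij_betw_mixed_radix[OF assms, of m2], of F]
  by (simp add: sum.cartesian_product split_beta)

lemma sum_mult_periodic_coprime:
  fixes m1 m2 :: int and g G :: "int \<Rightarrow> 'a::comm_semiring_1"
  assumes "m1 > 0" "m2 > 0" "coprime m1 m2"
    and "\<And>x. g (x mod m1) = g x" "\<And>x. G (x mod m2) = G x"
  shows "(\<Sum>t\<in>{0..<m1 * m2}. g t * G t) = (\<Sum>t\<in>{0..<m1}. g t) * (\<Sum>t\<in>{0..<m2}. G t)"
proof -
  have g_shift: "g (x + m1 * y) = g x" for x y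
    using assms(4)[of "x + m1 * y"] assms(4)[of x] by simp
  have "(\<Sum>t\<in>{0..<m1 * m2}. g t * G t) = (\<Sum>x\<in>{0..<m1}. g x * (\<Sum>y\<in>{0..<m2}. G (x + m1 * y)))"
    by (simp add: sum_mult_modulus_split[OF assms(1)] g_shift sum_distrib_left)
  also have "\<dots> = (\<Sum>x\<in>{0..<m1}. g x * (\<Sum>y\<in>{0..<m2}. G y))"
    by (subst sum_periodic_affine_reindex) (use assms in auto)
  finally show ?thesis
    by (simp add: sum_distrib_right)
qed

lemma sum_prod_periodic_primes:
  fixes g :: "nat \<Rightarrow> int \<Rightarrow> 'a::comm_semiring_1"
  assumes "finite P" "\<forall>p\<in>P. prime p" "\<And>p x. p \<in> P \<Longrightarrow> g p (x mod int p) = g p x"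
  shows "(\<Sum>t\<in>{0..<int (\<Prod>P)}. \<Prod>p\<in>P. g p t) = (\<Prod>p\<in>P. \<Sum>t\<in>{0..<int p}. g p t)"
  using assms
proof (induction P rule: finite_induct)
  case empty
  then show ?case by simp
next
  case (insert p P)
  have p: "prime p"
    using insert by auto
  have "\<not> p dvd \<Prod>P"
  proof
    assume "p dvd \<Prod>P"
    then obtain p' where "p' \<in> P" "p dvd p'"
      using prime_dvd_prod_iff[OF insert(1) p, of id] by auto
    then show False
      using insert primes_dvd_imp_eq[of p p'] by auto
  qed
  then have cop: "coprime (int p) (int (\<Prod>P))"
    using p prime_imp_coprime coprime_int_iff by blast
  have periodic: "(\<Prod>p'\<in>P. g p' (x mod int (\<Prod>P))) = (\<Prod>p'\<in>P. g p' x)" for x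
  proof (rule prod.cong[OF refl])
    fix p' assume "p' \<in> P"
    then have "int p' dvd int (\<Prod>P)"
      using insert(1) by (simp add: dvd_prodI)
    then have "(x mod int (\<Prod>P)) mod int p' = x mod int p'"
      by (rule mod_mod_cancel)
    then show "g p' (x mod int (\<Prod>P)) = g p' x"
      using insert.prems(2)[of p'] \<open>p' \<in> P\<close> by (metis insertCI)
  qed
  have "(\<Sum>t\<in>{0..<int (\<Prod>(insert p P))}. \<Prod>p\<in>insert p P. g p t)
      = (\<Sum>t\<in>{0..<int p * int (\<Prod>P)}. g p t * (\<Prod>p\<in>P. g p t))"
    using insert by simp
  also have "\<dots> = (\<Sum>t\<in>{0..<int p}. g p t) * (\<Sum>t\<in>{0..<int (\<Prod>P)}. \<Prod>p\<in>P. g p t)"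
  proof (rule sum_mult_periodic_coprime)
    show "0 < int (\<Prod>P)"
      using insert.prems(1) by (simp add: prime_gt_0_nat prod_pos)
  qed (use p cop insert.prems(2) periodic in \<open>auto simp: prime_gt_0_nat\<close>)
  finally show ?case
    using insert by simp
qed

section \<open>Consequences of primitivity\<close>

lemma dirichlet_character_progression_mod:
  assumes "dirichlet_character (p * m) \<chi>"
  shows "\<chi> (b + (k mod int p) * int m) = \<chi> (b + k * int m)"
proof -
  have "[(k mod int p) * int m = k * int m] (mod int (p * m))"
    by (simp add: cong_def mod_mult_mult2)
  then show ?thesis
    by (intro dirichlet_character_cong[OF assms] cong_add cong_refl)
qed

lemma primitive_character_sum_progression:
  assumes prim: "primitive_character q \<chi>" and p: "prime p" and q: "q = p * m"
  shows "(\<Sum>k\<in>{0..<int p}. \<chi> (b + k * int m)) = 0"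
proof -
  have dc: "dirichlet_character q \<chi>"
    using prim by (rule primitive_character_imp_dirichlet_character)
  have "m > 0" "m < q"
    using dirichlet_character_modulus_pos[OF dc] q p prime_gt_1_nat by auto
  then obtain c where c: "coprime c (int q)" "[c = 1] (mod int m)" "\<chi> c \<noteq> 1"
    using primitive_characterD[OF prim, of m] q by auto
  define h where "h k = \<chi> (b + k * int m)" for k
  have h_periodic: "h (k mod int p) = h k" for k
    unfolding h_def q by (rule dirichlet_character_progression_mod[OF dc[unfolded q]])
  obtain t where t: "c * b = b + t * int m"
    using c(2) by (metis cong_iff_lin cong_scalar_right mult.commute mult_1 cong_sym)
  \<comment> \<open>multiplication by \<open>c\<close> permutes the progression \<open>b + k m\<close> modulo \<open>q\<close>\<close>
  have "\<chi> c * h k = h (t + c * k)" for k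
    unfolding h_def using t by (simp add: algebra_simps flip: dirichlet_character_mult[OF dc])
  then have "\<chi> c * (\<Sum>k\<in>{0..<int p}. h k) = (\<Sum>k\<in>{0..<int p}. h (t + c * k))"
    by (simp add: sum_distrib_left)
  also have "\<dots> = (\<Sum>k\<in>{0..<int p}. h k)"
    by (rule sum_periodic_affine_reindex) (use p prime_gt_0_nat h_periodic c(1) q in auto)
  finally have "(\<chi> c - 1) * (\<Sum>k\<in>{0..<int p}. h k) = 0"
    by (simp add: algebra_simps)
  then show ?thesis
    using c(3) unfolding h_def by simp
qed

lemma primitive_character_sum_progression_mult:
  assumes prim: "primitive_character q \<chi>" and p: "prime p" and q: "q = p * m"
    and K: "coprime (int K) (int p)"
  shows "(\<Sum>k\<in>{0..<int p}. \<chi> (c + k * int (m * K))) = 0"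
proof -
  have dc: "dirichlet_character q \<chi>"
    using prim by (rule primitive_character_imp_dirichlet_character)
  define h where "h k = \<chi> (c + k * int m)" for k
  have h_periodic: "h (k mod int p) = h k" for k
    unfolding h_def q by (rule dirichlet_character_progression_mod[OF dc[unfolded q]])
  have "(\<Sum>k\<in>{0..<int p}. \<chi> (c + k * int (m * K))) = (\<Sum>k\<in>{0..<int p}. h (0 + int K * k))"
    unfolding h_def by (simp add: mult_ac)
  also have "\<dots> = (\<Sum>k\<in>{0..<int p}. h k)"
    by (rule sum_periodic_affine_reindex) (use p prime_gt_0_nat h_periodic K in auto)
  also have "\<dots> = 0"
    unfolding h_def by (rule primitive_character_sum_progression[OF prim p q])
  finally show ?thesis .
qed

lemma cong_power_prime_lift:
  fixes x d :: int
  assumes "[x = 1] (mod d)" "int p dvd d"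
  shows "[x ^ p = 1] (mod d * int p)"
proof -
  define S where "S = (\<Sum>i<p. x ^ i)"
  have "[S = (\<Sum>i<p. 1)] (mod d)"
    unfolding S_def by (rule cong_sum) (use assms(1) cong_pow in fastforce)
  then have "[S = int p] (mod int p)"
    using assms(2) cong_dvd_modulus by simp
  then have "int p dvd S"
    by (simp add: cong_dvd_iff)
  moreover have "d dvd x - 1"
    using assms(1) by (simp add: cong_iff_dvd_diff)
  ultimately have "d * int p dvd (x - 1) * S"
    by (simp add: mult_dvd_mono)
  then show ?thesis
    unfolding S_def by (simp add: power_diff_1_eq cong_iff_dvd_diff)
qed

text \<open>If \<open>p\<^sup>2\<close> divided \<open>q\<close>, the character would take an element \<open>n \<equiv> 1 (mod q/p)\<close> to a
  \<open>p\<close>-th root of unity different from \<open>1\<close>, because \<open>n\<^sup>p \<equiv> 1 (mod q)\<close>; for odd \<open>p\<close> no such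
  real number exists.\<close>

lemma primitive_real_character_squarefree:
  assumes prim: "primitive_character q \<chi>" and real: "real_character \<chi>" and odd: "odd q"
  shows "squarefree q"
proof -
  have dc: "dirichlet_character q \<chi>"
    using prim by (rule primitive_character_imp_dirichlet_character)
  have "\<not> p ^ 2 dvd q" if p: "prime p" for p
  proof
    assume "p ^ 2 dvd q"
    then obtain d where d: "q = p * d" and "p dvd d"
      using p by (auto simp: power2_eq_square elim!: dvdE)
    have "d > 0"
      using d dirichlet_character_modulus_pos[OF dc] by (cases d) auto
    then have "d < q"
      using d prime_gt_1_nat[OF p] by simp
    then obtain n where n: "coprime n (int q)" "[n = 1] (mod int d)" "\<chi> n \<noteq> 1"
      using primitive_characterD[OF prim, of d] d by auto
    have "[n ^ p = 1] (mod int q)"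
      using cong_power_prime_lift[OF n(2), of p] \<open>p dvd d\<close> d by (simp add: mult.commute)
    then have "\<chi> n ^ p = 1"
      by (metis dirichlet_character_cong[OF dc] dirichlet_character_power[OF dc]
          dirichlet_character_one[OF dc])
    moreover have "odd p"
      using odd d p by (metis dvd_triv_left even_mult_iff prime_odd_nat)
    ultimately show False
      using real_character_unit[OF dc real n(1)] n(3) by auto
  qed
  then show ?thesis
    using dirichlet_character_modulus_pos[OF dc] squarefree_factorial_semiring by auto
qed

section \<open>The Legendre symbol and the curves \<open>E\<^sub>\<lambda>\<close>\<close>

lemma Legendre_cong:
  assumes "[a = a'] (mod int p)"
  shows "Legendre a (int p) = Legendre a' (int p)"
proof -
  have "QuadRes (int p) a \<longleftrightarrow> QuadRes (int p) a'"
    unfolding QuadRes_def using assms by (meson cong_sym cong_trans)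
  moreover have "[a = 0] (mod int p) \<longleftrightarrow> [a' = 0] (mod int p)"
    using assms by (meson cong_sym cong_trans)
  ultimately show ?thesis
    unfolding Legendre_def by simp
qed

lemma Legendre_mult:
  assumes "prime p" "2 < p"
  shows "Legendre (a * b) (int p) = Legendre a (int p) * Legendre b (int p)"
proof -
  define D where "D = Legendre (a * b) (int p) - Legendre a (int p) * Legendre b (int p)"
  have ab: "[Legendre (a * b) (int p) = (a * b) ^ ((p - 1) div 2)] (mod int p)"
    using euler_criterion[of p "a * b"] assms by simp
  have "[Legendre a (int p) * Legendre b (int p) = a ^ ((p - 1) div 2) * b ^ ((p - 1) div 2)] (mod int p)"
    using euler_criterion[of p a] euler_criterion[of p b] assms cong_mult by blast
  then have "int p dvd D"
    using ab unfolding D_def power_mult_distrib by (metis cong_sym cong_trans cong_iff_dvd_diff)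
  moreover have "\<bar>D\<bar> < int p"
    using assms(2) unfolding D_def Legendre_def by auto
  ultimately have "D = 0"
    using dvd_imp_le_int[of D "int p"] by auto
  then show ?thesis
    unfolding D_def by simp
qed

lemma Legendre_square:
  assumes "prime p" "\<not> int p dvd s"
  shows "Legendre (s ^ 2) (int p) = 1"
proof -
  have "\<not> int p dvd s ^ 2"
    using assms by (simp add: prime_dvd_power_iff)
  then show ?thesis
    unfolding Legendre_def QuadRes_def by (auto simp: cong_0_iff intro: cong_refl)
qed

lemma square_roots_mod_prime:
  assumes p: "prime p" and z: "[z ^ 2 = c] (mod int p)" "0 < z" "z < int p"
  shows "{y \<in> {0..<int p}. [y ^ 2 = c] (mod int p)} = {z, int p - z}"
proof -
  have "y \<in> {z, int p - z}" if y: "y \<in> {0..<int p}" "[y ^ 2 = c] (mod int p)" for y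
  proof -
    have "[y ^ 2 = z ^ 2] (mod int p)"
      using y z by (meson cong_sym cong_trans)
    then have "int p dvd (y - z) * (y + z)"
      by (simp add: cong_iff_dvd_diff power2_eq_square algebra_simps)
    then have "int p dvd (y - z) * (y + z) - int p * (y - z)"
      by (simp add: dvd_diff)
    also have "(y - z) * (y + z) - int p * (y - z) = (y - z) * (y - (int p - z))"
      by (simp add: algebra_simps)
    finally have "[y = z] (mod int p) \<or> [y = int p - z] (mod int p)"
      using p by (simp add: prime_dvd_mult_iff cong_iff_dvd_diff)
    then show ?thesis
      using y z cong_less_imp_eq_int[of y "int p"] by auto
  qed
  moreover have "[(int p - z) ^ 2 = c] (mod int p)"
  proof -
    have "[(int p - z) ^ 2 = z ^ 2] (mod int p)"
      by (simp add: cong_iff_dvd_diff power2_eq_square algebra_simps)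
    then show ?thesis
      using z(1) by (rule cong_trans)
  qed
  ultimately show ?thesis
    using z by auto
qed

lemma card_square_roots_mod_prime_residue:
  assumes p: "prime p" "2 < p" and c: "\<not> [c = 0] (mod int p)" "QuadRes (int p) c"
  shows "card {y \<in> {0..<int p}. [y ^ 2 = c] (mod int p)} = 2"
proof -
  obtain y0 where "[y0 ^ 2 = c] (mod int p)"
    using c(2) unfolding QuadRes_def by blast
  then have z: "[(y0 mod int p) ^ 2 = c] (mod int p)"
    by (metis cong_def power_mod)
  moreover have "y0 mod int p \<noteq> 0"
    using z c(1) by (auto simp: cong_sym)
  moreover have "0 \<le> y0 mod int p" "y0 mod int p < int p"
    using p prime_gt_0_nat by auto
  moreover have "y0 mod int p \<noteq> int p - y0 mod int p"
  proof
    assume "y0 mod int p = int p - y0 mod int p"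
    then have "int p = 2 * (y0 mod int p)"
      by linarith
    then have "even p"
      by (metis dvd_triv_left even_of_nat)
    then show False
      using p prime_odd_nat by simp
  qed
  ultimately show ?thesis
    using square_roots_mod_prime[OF p(1) z] by simp
qed

lemma square_roots_mod_prime_zero:
  assumes p: "prime p" and c: "[c = 0] (mod int p)"
  shows "{y \<in> {0..<int p}. [y ^ 2 = c] (mod int p)} = {0}"
proof safe
  fix y assume y: "y \<in> {0..<int p}" "[y ^ 2 = c] (mod int p)"
  then have "[y ^ 2 = 0] (mod int p)"
    using c by (auto dest: cong_trans)
  then have "int p dvd y"
    using p prime_dvd_power_iff[of "int p" 2 y] by (simp add: cong_0_iff)
  moreover have "0 \<le> y" "y < int p"
    using y(1) by auto
  ultimately show "y = 0"
    using zdvd_not_zless[of y "int p"] by fastforce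
qed (use c p prime_gt_0_nat in \<open>auto simp: cong_sym\<close>)

lemma card_square_roots_mod_prime:
  assumes p: "prime p" "2 < p"
  shows "int (card {y \<in> {0..<int p}. [y ^ 2 = c] (mod int p)}) = 1 + Legendre c (int p)"
proof -
  consider "[c = 0] (mod int p)" | "\<not> [c = 0] (mod int p)" "QuadRes (int p) c"
    | "\<not> QuadRes (int p) c"
    by blast
  then show ?thesis
  proof cases
    case 1
    then show ?thesis
      using square_roots_mod_prime_zero[OF p(1)] unfolding Legendre_def by simp
  next
    case 2
    then show ?thesis
      using card_square_roots_mod_prime_residue[OF p 2] unfolding Legendre_def by simp
  next
    case 3
    moreover have "\<not> [c = 0] (mod int p)"
      using 3 cong_sym[of c 0] unfolding QuadRes_def by (metis power_zero_numeral)
    moreover have empty: "{y \<in> {0..<int p}. [y ^ 2 = c] (mod int p)} = {}"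
      using 3 unfolding QuadRes_def by auto
    ultimately show ?thesis
      unfolding Legendre_def empty by simp
  qed
qed

lemma num_points_E_Legendre:
  assumes "prime p" "2 < p"
  shows "int (num_points_E p lam)
    = int p + 1 + (\<Sum>x\<in>{0..<int p}. Legendre (x * (x - 1) * (x - lam)) (int p))"
proof -
  let ?R = "\<lambda>x. {y \<in> {0..<int p}. [y ^ 2 = x * (x - 1) * (x - lam)] (mod int p)}"
  have "{(x, y) \<in> {0..<int p} \<times> {0..<int p}. [y ^ 2 = x * (x - 1) * (x - lam)] (mod int p)}
      = Sigma {0..<int p} ?R"
    by auto
  moreover have "card (Sigma {0..<int p} ?R) = (\<Sum>x\<in>{0..<int p}. card (?R x))"
    by (rule card_SigmaI) (auto intro: finite_subset[of _ "{0..<int p}"])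
  ultimately have "int (num_points_E p lam) = (\<Sum>x\<in>{0..<int p}. int (card (?R x))) + 1"
    unfolding num_points_E_def by simp
  also have "\<dots> = (\<Sum>x\<in>{0..<int p}. 1 + Legendre (x * (x - 1) * (x - lam)) (int p)) + 1"
    using card_square_roots_mod_prime[OF assms] by simp
  finally show ?thesis
    by (simp add: sum.distrib)
qed

lemma cubic_substitution_cong:
  fixes b t :: int
  assumes "[2 * b = 1] (mod m)"
  shows "[(3 * b * (1 + t)) * (3 * b * (1 + t) - 1) * (3 * b * (1 + t) - 3 * b ^ 2)
        = (3 * b ^ 2) ^ 2 * ((1 + t) * (1 + 2 * t) * (1 + 3 * t))] (mod m)"
proof -
  have half: "m dvd 2 * b - 1"
    using assms by (simp add: cong_iff_dvd_diff)
  have "[3 * b * (1 + t) - 1 = b * (1 + 3 * t)] (mod m)"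
    using half by (simp add: cong_iff_dvd_diff algebra_simps)
  moreover have "[3 * b * (1 + t) - 3 * b ^ 2 = 3 * b ^ 2 * (1 + 2 * t)] (mod m)"
  proof -
    have "3 * b * (1 + t) - 3 * b ^ 2 - 3 * b ^ 2 * (1 + 2 * t) = - (3 * b * (1 + t)) * (2 * b - 1)"
      by (simp add: algebra_simps power2_eq_square)
    then show ?thesis
      using half by (simp add: cong_iff_dvd_diff)
  qed
  ultimately have "[(3 * b * (1 + t)) * (3 * b * (1 + t) - 1) * (3 * b * (1 + t) - 3 * b ^ 2)
      = (3 * b * (1 + t)) * (b * (1 + 3 * t)) * (3 * b ^ 2 * (1 + 2 * t))] (mod m)"
    by (intro cong_mult cong_refl)
  then show ?thesis
    by (simp add: algebra_simps power2_eq_square)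
qed

text \<open>The substitution \<open>x = 3b(1 + t)\<close> turns \<open>x(x - 1)(x - 3b\<^sup>2)\<close> into
  \<open>(1 + t)(1 + 2t)(1 + 3t)\<close> times the square \<open>(3b\<^sup>2)\<^sup>2\<close>.\<close>

lemma sum_Legendre_cubic_eq_curve:
  assumes p: "prime p" "3 < p" and b: "[2 * b = 1] (mod int p)"
  shows "(\<Sum>t\<in>{0..<int p}. Legendre ((1 + t) * (1 + 2 * t) * (1 + 3 * t)) (int p))
       = (\<Sum>x\<in>{0..<int p}. Legendre (x * (x - 1) * (x - 3 * b ^ 2)) (int p))"
proof -
  define h where "h x = Legendre (x * (x - 1) * (x - 3 * b ^ 2)) (int p)" for x
  have h_periodic: "h (x mod int p) = h x" for x
    unfolding h_def by (rule Legendre_cong) (intro cong_mult cong_diff cong_refl; simp add: cong_def)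
  have "coprime (2 * b) (int p)"
    using b cong_imp_coprime coprime_1_left cong_sym by blast
  moreover have "coprime 3 (int p)"
    using p by (intro prime_imp_coprime_int[THEN coprime_commute[THEN iffD1]]) (auto dest: zdvd_imp_le)
  ultimately have unit: "coprime (3 * b) (int p)" "\<not> int p dvd 3 * b ^ 2"
    using p by (auto simp: power2_eq_square prime_dvd_mult_iff dest: coprime_common_divisor)
  have "(\<Sum>x\<in>{0..<int p}. h x) = (\<Sum>t\<in>{0..<int p}. h (3 * b + 3 * b * t))"
    by (rule sum_periodic_affine_reindex[symmetric]) (use p prime_gt_0_nat h_periodic unit in auto)
  also have "\<dots> = (\<Sum>t\<in>{0..<int p}. Legendre ((1 + t) * (1 + 2 * t) * (1 + 3 * t)) (int p))"
  proof (rule sum.cong[OF refl])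
    fix t
    have "3 * b + 3 * b * t = 3 * b * (1 + t)"
      by (simp add: algebra_simps)
    then have "h (3 * b + 3 * b * t) = Legendre ((3 * b ^ 2) ^ 2 * ((1 + t) * (1 + 2 * t) * (1 + 3 * t))) (int p)"
      unfolding h_def by (simp only: Legendre_cong[OF cubic_substitution_cong[OF b]])
    then show "h (3 * b + 3 * b * t) = Legendre ((1 + t) * (1 + 2 * t) * (1 + 3 * t)) (int p)"
      using Legendre_mult[of p] Legendre_square[OF p(1) unit(2)] p by simp
  qed
  finally show ?thesis
    unfolding h_def by simp
qed

lemma sum_Legendre_cubic_eq_num_points:
  assumes p: "prime p" "3 < p" and b: "[2 * b = 1] (mod int p)"
  shows "(\<Sum>t\<in>{0..<int p}. Legendre ((1 + t) * (1 + 2 * t) * (1 + 3 * t)) (int p))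
       = int (num_points_E p (3 * b ^ 2)) - int p - 1"
proof -
  have "int (num_points_E p (3 * b ^ 2))
      = int p + 1 + (\<Sum>x\<in>{0..<int p}. Legendre (x * (x - 1) * (x - 3 * b ^ 2)) (int p))"
    by (rule num_points_E_Legendre[OF p(1)]) (use p(2) in linarith)
  then show ?thesis
    using sum_Legendre_cubic_eq_curve[OF p b] by linarith
qed

lemma real_character_prime_eq_Legendre:
  assumes p: "prime p" "2 < p" and dc: "dirichlet_character p \<psi>" and real: "real_character \<psi>"
    and nontrivial: "\<psi> c \<noteq> 1" "\<not> int p dvd c"
  shows "\<psi> x = of_int (Legendre x (int p))"
proof -
  have "prime (int p)"
    using p by simp
  then have coprime_iff: "coprime y (int p) \<longleftrightarrow> \<not> int p dvd y" for y
    by (metis coprime_commute prime_imp_coprime coprime_absorb_left not_prime_unit)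
  have on_residues: "\<psi> y = 1" if "\<not> int p dvd y" "QuadRes (int p) y" for y
    using real_character_QuadRes[OF dc real] coprime_iff that by blast
  have Legendre_eq_1: "\<psi> y = 1" if "Legendre y (int p) = 1" for y
    using that on_residues by (auto simp: Legendre_def cong_0_iff split: if_splits)
  have Legendre_c: "Legendre c (int p) = -1"
    using on_residues nontrivial unfolding Legendre_def by (auto simp: cong_0_iff)
  have \<psi>_c: "\<psi> c = -1"
    using real_character_unit[OF dc real] nontrivial coprime_iff by blast
  show ?thesis
  proof (cases "int p dvd x")
    case True
    then show ?thesis
      using dirichlet_character_eq_0_iff[OF dc] coprime_iff
      unfolding Legendre_def by (simp add: cong_0_iff)
  next
    case False
    then consider "Legendre x (int p) = 1" | "Legendre x (int p) = -1"
      unfolding Legendre_def by (cases "QuadRes (int p) x") (auto simp: cong_0_iff)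
    then show ?thesis
    proof cases
      case 1
      then show ?thesis
        using Legendre_eq_1 by simp
    next
      case 2
      \<comment> \<open>a product of two non-residues is a residue\<close>
      then have "Legendre (x * c) (int p) = 1"
        using Legendre_mult[OF p] Legendre_c by simp
      then have "\<psi> x * \<psi> c = 1"
        using Legendre_eq_1 dirichlet_character_mult[OF dc] by metis
      then show ?thesis
        using 2 \<psi>_c by (simp add: minus_equation_iff)
    qed
  qed
qed

section \<open>A real primitive character is a product of Legendre symbols\<close>

lemma squarefree_prod_prime_factors:
  fixes n :: nat
  assumes "squarefree n"
  shows "\<Prod>(prime_factors n) = n"
proof -
  have "n \<noteq> 0"
    using assms by (metis not_squarefree_0)
  then have "n = (\<Prod>p\<in>prime_factors n. p ^ multiplicity p n)"
    by (simp add: prime_factorization_nat)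
  also have "\<dots> = \<Prod>(prime_factors n)"
    using assms squarefree_factorial_semiring'[OF \<open>n \<noteq> 0\<close>] by simp
  finally show ?thesis ..
qed

lemma squarefree_coprime_cofactor:
  fixes n :: nat
  assumes "squarefree n" "p \<in> prime_factors n"
  shows "coprime p (n div p)"
proof -
  have p: "prime p" "p dvd n"
    using assms(2) by auto
  have "\<not> p dvd n div p"
  proof
    assume "p dvd n div p"
    then have "p ^ 2 dvd n"
      using p(2) by (metis dvd_mult_div_cancel mult_dvd_mono power2_eq_square dvd_refl)
    then show False
      using assms(1) p(1) squarefreeD not_prime_unit by blast
  qed
  then show ?thesis
    using p(1) prime_imp_coprime by blast
qed

lemma squarefree_cong_prime_factors:
  fixes n :: nat
  assumes "squarefree n" "\<forall>p\<in>prime_factors n. [u = v] (mod int p)"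
  shows "[u = v] (mod int n)"
proof -
  have "[u = v] (mod (\<Prod>p\<in>prime_factors n. int p))"
    by (rule cong_cong_prod_coprime) (use assms(2) in \<open>auto intro: primes_coprime\<close>)
  then show ?thesis
    using squarefree_prod_prime_factors[OF assms(1)] by (simp flip: of_nat_prod)
qed

lemma cong_prime_cofactor:
  assumes "p dvd n" "coprime p (n div p)" "[u = v] (mod int p)" "[u = v] (mod int (n div p))"
  shows "[u = v] (mod int n)"
proof -
  have "[u = v] (mod int p * int (n div p))"
    using coprime_cong_mult[OF assms(3,4)] assms(2) by simp
  then show ?thesis
    using assms(1) by (metis of_nat_mult dvd_mult_div_cancel)
qed

text \<open>The residue that is \<open>x\<close> modulo \<open>p\<close> and \<open>1\<close> modulo \<open>n/p\<close>; restricting a character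
  modulo \<open>n\<close> to these residues yields its \<open>p\<close>-component.\<close>

definition crt_lift :: "nat \<Rightarrow> nat \<Rightarrow> int \<Rightarrow> int" where
  "crt_lift n p x = 1 + int (n div p) * (SOME s. [int (n div p) * s = 1] (mod int p)) * (x - 1)"

lemma crt_lift_cong:
  assumes "coprime p (n div p)"
  shows "[crt_lift n p x = x] (mod int p)" "[crt_lift n p x = 1] (mod int (n div p))"
proof -
  define m where "m = int (n div p)"
  define s where "s = (SOME s. [m * s = 1] (mod int p))"
  have "coprime m (int p)"
    using assms unfolding m_def by (simp add: coprime_commute)
  then have "\<exists>s. [m * s = 1] (mod int p)"
    using cong_solve_int[of m "int p"] by (simp add: gcd.commute coprime_iff_gcd_eq_1)
  then have s: "[m * s = 1] (mod int p)"
    unfolding s_def by (rule someI_ex)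
  have lift: "crt_lift n p x = 1 + m * s * (x - 1)"
    unfolding crt_lift_def m_def s_def by simp
  have "[1 + m * s * (x - 1) = 1 + 1 * (x - 1)] (mod int p)"
    using s by (intro cong_add cong_mult cong_refl)
  then show "[crt_lift n p x = x] (mod int p)"
    using lift by simp
  have "[1 + m * s * (x - 1) = 1 + 0] (mod m)"
    by (intro cong_add cong_refl) (simp add: cong_0_iff)
  then show "[crt_lift n p x = 1] (mod int (n div p))"
    using lift m_def by simp
qed

lemma dirichlet_character_crt_lift:
  assumes dc: "dirichlet_character q \<chi>" and p: "prime p" "p dvd q" and cop: "coprime p (q div p)"
  shows "dirichlet_character p (\<lambda>x. \<chi> (crt_lift q p x))"
proof -
  note lift = crt_lift_cong[OF cop]
  note cong_q = cong_prime_cofactor[OF p(2) cop]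
  have coprime_iff: "coprime (crt_lift q p x) (int q) \<longleftrightarrow> coprime x (int p)" for x
  proof -
    have "coprime (crt_lift q p x) (int (q div p))"
      using lift(2)[of x] by (metis coprime_1_left coprime_cong_cong_left cong_sym)
    then have "coprime (crt_lift q p x) (int q) \<longleftrightarrow> coprime (crt_lift q p x) (int p)"
      using p(2) by (metis coprime_mult_right_iff of_nat_mult dvd_mult_div_cancel)
    also have "\<dots> \<longleftrightarrow> coprime x (int p)"
      using coprime_cong_cong_left[OF lift(1)] .
    finally show ?thesis .
  qed
  show ?thesis
    unfolding dirichlet_character_def
  proof (intro conjI allI)
    show "\<chi> (crt_lift q p (n * m)) = \<chi> (crt_lift q p n) * \<chi> (crt_lift q p m)" for n m
    proof -
      have "[crt_lift q p (n * m) = crt_lift q p n * crt_lift q p m] (mod int q)"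
        by (rule cong_q)
           (use lift(1)[of "n * m"] cong_mult[OF lift(1)[of n] lift(1)[of m]]
             lift(2)[of "n * m"] cong_mult[OF lift(2)[of n] lift(2)[of m]]
             in \<open>auto intro: cong_trans cong_sym\<close>)
      then show ?thesis
        by (metis dirichlet_character_cong[OF dc] dirichlet_character_mult[OF dc])
    qed
    show "\<chi> (crt_lift q p 1) = 1"
      unfolding crt_lift_def using dirichlet_character_one[OF dc] by simp
    show "\<chi> (crt_lift q p (n + int p)) = \<chi> (crt_lift q p n)" for n
      using lift by (intro dirichlet_character_cong[OF dc] cong_q)
        (auto simp: cong_def intro: cong_trans cong_sym)
    show "\<chi> (crt_lift q p n) = 0 \<longleftrightarrow> \<not> coprime n (int p)" for n
      using dirichlet_character_eq_0_iff[OF dc] coprime_iff by blast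
  qed (use p(1) prime_gt_0_nat in auto)
qed

lemma primitive_character_crt_lift_nontrivial:
  assumes prim: "primitive_character q \<chi>" and p: "prime p" "p dvd q" and cop: "coprime p (q div p)"
  obtains c where "\<chi> (crt_lift q p c) \<noteq> 1" "\<not> int p dvd c"
proof -
  have dc: "dirichlet_character q \<chi>"
    using prim by (rule primitive_character_imp_dirichlet_character)
  have "q div p < q" "q div p dvd q"
    using p dirichlet_character_modulus_pos[OF dc] prime_gt_1_nat by (auto simp: div_less_dividend)
  then obtain n where n: "coprime n (int q)" "[n = 1] (mod int (q div p))" "\<chi> n \<noteq> 1"
    using primitive_characterD[OF prim] by blast
  have "[crt_lift q p n = n] (mod int q)"
    by (rule cong_prime_cofactor[OF p(2) cop]) (use crt_lift_cong[OF cop] n in \<open>meson cong_sym cong_trans\<close>)+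
  then have "\<chi> (crt_lift q p n) \<noteq> 1"
    using n(3) dirichlet_character_cong[OF dc] by metis
  moreover have "\<not> int p dvd n"
  proof
    assume "int p dvd n"
    then have "is_unit (int p)"
      using n(1) p(2) coprime_common_divisor by (metis int_dvd_int_iff)
    then show False
      using p(1) by simp
  qed
  ultimately show ?thesis
    using that by blast
qed

lemma squarefree_cong_prod_crt_lift:
  assumes sqf: "squarefree n"
  shows "[x = (\<Prod>p\<in>prime_factors n. crt_lift n p x)] (mod int n)"
proof (rule squarefree_cong_prime_factors[OF sqf], intro ballI)
  fix r assume r: "r \<in> prime_factors n"
  have "[crt_lift n p x = 1] (mod int r)" if p: "p \<in> prime_factors n - {r}" for p
  proof -
    have "r dvd p * (n div p)"
      using r p by (metis DiffD1 in_prime_factors_iff dvd_mult_div_cancel)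
    moreover have "\<not> r dvd p"
      using r p primes_dvd_imp_eq[of r p] by auto
    ultimately have "int r dvd int (n div p)"
      using r prime_dvd_mult_iff by (metis in_prime_factors_iff int_dvd_int_iff)
    then show ?thesis
      using crt_lift_cong(2)[OF squarefree_coprime_cofactor[OF sqf], of p x] p
      by (auto intro: cong_dvd_modulus)
  qed
  then have "[(\<Prod>p\<in>prime_factors n - {r}. crt_lift n p x) = 1] (mod int r)"
    using cong_prod[of "prime_factors n - {r}" "\<lambda>p. crt_lift n p x" "\<lambda>_. 1"] by simp
  then have "[crt_lift n r x * (\<Prod>p\<in>prime_factors n - {r}. crt_lift n p x) = x * 1] (mod int r)"
    using crt_lift_cong(1)[OF squarefree_coprime_cofactor[OF sqf r]] cong_mult by blast
  then show "[x = (\<Prod>p\<in>prime_factors n. crt_lift n p x)] (mod int r)"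
    using r by (simp add: prod.remove cong_sym)
qed

theorem real_primitive_character_eq_prod_Legendre:
  assumes prim: "primitive_character q \<chi>" and real: "real_character \<chi>"
    and sqf: "squarefree q" and odd: "odd q"
  shows "\<chi> x = (\<Prod>p\<in>prime_factors q. of_int (Legendre x (int p)))"
proof -
  have dc: "dirichlet_character q \<chi>"
    using prim by (rule primitive_character_imp_dirichlet_character)
  have "\<chi> (crt_lift q p x) = of_int (Legendre x (int p))" if P: "p \<in> prime_factors q" for p
  proof -
    have p: "prime p" "p dvd q" "coprime p (q div p)"
      using P squarefree_coprime_cofactor[OF sqf P] by auto
    then have "p \<noteq> 2"
      using odd by auto
    then have "2 < p"
      using prime_ge_2_nat[OF p(1)] by linarith
    moreover obtain c where "\<chi> (crt_lift q p c) \<noteq> 1" "\<not> int p dvd c"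
      using primitive_character_crt_lift_nontrivial[OF prim p] .
    ultimately show ?thesis
      using real_character_prime_eq_Legendre[OF p(1) _ dirichlet_character_crt_lift[OF dc p]] real
      unfolding real_character_def by blast
  qed
  moreover have "\<chi> x = (\<Prod>p\<in>prime_factors q. \<chi> (crt_lift q p x))"
    using squarefree_cong_prod_crt_lift[OF sqf] dirichlet_character_cong[OF dc]
      dirichlet_character_prod[OF dc] by metis
  ultimately show ?thesis
    by simp
qed

section \<open>The sum \<open>\<Xi>\<close> for equal moduli\<close>

definition Xi_tuples :: "nat \<Rightarrow> (nat \<Rightarrow> nat) \<Rightarrow> (nat \<Rightarrow> int) set" where
  "Xi_tuples q a = {b \<in> {0..<4::nat} \<rightarrow>\<^sub>E {0..<int q}.
        \<exists>n d :: int. \<forall>j<4. int (a j) dvd n + int j * d \<and>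
                     [(n + int j * d) div int (a j) = b j] (mod int q)}"

lemma Xi_eq_sum_Xi_tuples: "Xi \<chi> q a = (\<Sum>b\<in>Xi_tuples q a. \<Prod>j<4. \<chi> (b j))"
  unfolding Xi_def Xi_tuples_def by simp

lemma finite_Xi_tuples: "finite (Xi_tuples q a)"
  by (rule finite_subset[of _ "{0..<4::nat} \<rightarrow>\<^sub>E {0..<int q}"])
     (auto simp: Xi_tuples_def intro: finite_PiE)

definition progression_tuple :: "nat \<Rightarrow> int \<times> int \<Rightarrow> nat \<Rightarrow> int" where
  "progression_tuple q = (\<lambda>(n, d). restrict (\<lambda>j. (n + int j * d) mod int q) {0..<4})"

lemma inj_on_progression_tuple:
  "inj_on (progression_tuple q) ({0..<int q} \<times> {0..<int q})"
proof (rule inj_onI, clarify)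
  fix n d n' d'
  assume range: "n \<in> {0..<int q}" "d \<in> {0..<int q}" "n' \<in> {0..<int q}" "d' \<in> {0..<int q}"
    and eq: "progression_tuple q (n, d) = progression_tuple q (n', d')"
  have "n mod int q = n' mod int q"
    using fun_cong[OF eq, of 0] unfolding progression_tuple_def by simp
  then have "n = n'"
    using range by simp
  moreover have "(n + d) mod int q = (n + d') mod int q"
    using fun_cong[OF eq, of 1] \<open>n = n'\<close> unfolding progression_tuple_def by simp
  then have "d = d'"
    using range by (metis cong_def cong_add_lcancel mod_pos_pos_trivial atLeastLessThan_iff)
  ultimately show "n = n' \<and> d = d'" ..
qed

lemma progression_tuple_in_Xi_tuples:
  assumes "q > 0" and a: "\<forall>j<4. a j = a0" "a0 > 0"
  shows "progression_tuple q (n, d) \<in> Xi_tuples q a"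
proof -
  have "int (a j) dvd int a0 * n + int j * (int a0 * d) \<and>
        [(int a0 * n + int j * (int a0 * d)) div int (a j) = progression_tuple q (n, d) j] (mod int q)"
    if "j < 4" for j
  proof -
    have "int a0 * n + int j * (int a0 * d) = int a0 * (n + int j * d)"
      by (simp add: algebra_simps)
    then show ?thesis
      using a that unfolding progression_tuple_def by (simp add: cong_def)
  qed
  moreover have "progression_tuple q (n, d) \<in> {0..<4::nat} \<rightarrow>\<^sub>E {0..<int q}"
    using assms(1) unfolding progression_tuple_def by auto
  ultimately show ?thesis
    unfolding Xi_tuples_def by blast
qed

lemma Xi_tuples_equal_moduli_subset:
  assumes "q > 0" and a: "\<forall>j<4. a j = a0" "a0 > 0"
  shows "Xi_tuples q a \<subseteq> progression_tuple q ` ({0..<int q} \<times> {0..<int q})"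
proof
  fix b assume "b \<in> Xi_tuples q a"
  then obtain n d where nd: "\<forall>j<4. int a0 dvd n + int j * d \<and>
                               [(n + int j * d) div int a0 = b j] (mod int q)"
    and b: "b \<in> {0..<4::nat} \<rightarrow>\<^sub>E {0..<int q}"
    using a unfolding Xi_tuples_def by auto
  have "int a0 dvd n" "int a0 dvd n + d"
    using nd[rule_format, of 0] nd[rule_format, of 1] by simp_all
  then obtain n' d' where n': "n = int a0 * n'" and d': "d = int a0 * d'"
    by (metis add_diff_cancel_left' dvd_diff dvdE)
  have "b j = progression_tuple q (n' mod int q, d' mod int q) j" for j
  proof (cases "j < 4")
    case True
    have "(n + int j * d) div int a0 = n' + int j * d'"
      using a(2) n' d' by (simp add: algebra_simps)
    then have "[n' + int j * d' = b j] (mod int q)"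
      using nd True by metis
    moreover have "b j \<in> {0..<int q}"
      using b True by auto
    ultimately have "b j = (n' + int j * d') mod int q"
      by (simp add: cong_def)
    moreover have "[n' mod int q + int j * (d' mod int q) = n' + int j * d'] (mod int q)"
      by (intro cong_add cong_mult cong_refl) (simp_all add: cong_def)
    ultimately show ?thesis
      using True unfolding progression_tuple_def by (simp add: cong_def)
  qed (use b in \<open>auto simp: progression_tuple_def\<close>)
  moreover have "(n' mod int q, d' mod int q) \<in> {0..<int q} \<times> {0..<int q}"
    using assms(1) by auto
  ultimately show "b \<in> progression_tuple q ` ({0..<int q} \<times> {0..<int q})"
    by (metis ext image_eqI)
qed

lemma Xi_tuples_equal_moduli:
  assumes "q > 0" and a: "\<forall>j<4. a j = a0" "a0 > 0"
  shows "Xi_tuples q a = progression_tuple q ` ({0..<int q} \<times> {0..<int q})"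
proof
  show "progression_tuple q ` ({0..<int q} \<times> {0..<int q}) \<subseteq> Xi_tuples q a"
    by clarify (rule progression_tuple_in_Xi_tuples[OF assms])
qed (rule Xi_tuples_equal_moduli_subset[OF assms])

lemma Xi_equal_moduli:
  assumes dc: "dirichlet_character q \<chi>" and a: "\<forall>j<4. a j = a0" "a0 > 0"
  shows "Xi \<chi> q a = (\<Sum>n\<in>{0..<int q}. \<Sum>d\<in>{0..<int q}. \<Prod>j<4. \<chi> (n + int j * d))"
proof -
  have "Xi \<chi> q a = (\<Sum>z\<in>{0..<int q} \<times> {0..<int q}. \<Prod>j<4. \<chi> (progression_tuple q z j))"
    unfolding Xi_eq_sum_Xi_tuples
      Xi_tuples_equal_moduli[OF dirichlet_character_modulus_pos[OF dc] a]
    using sum.reindex[OF inj_on_progression_tuple] by simp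
  also have "\<dots> = (\<Sum>z\<in>{0..<int q} \<times> {0..<int q}. \<Prod>j<4. \<chi> (fst z + int j * snd z))"
    unfolding progression_tuple_def
    by (intro sum.cong prod.cong refl) (auto simp: split_beta dirichlet_character_mod[OF dc])
  finally show ?thesis
    by (simp add: sum.cartesian_product split_beta)
qed

lemma card_coprime_residues:
  assumes "q > 1"
  shows "card {n \<in> {0..<int q}. coprime n (int q)} = totient q"
proof -
  have "{n \<in> {0..<int q}. coprime n (int q)} = int ` totatives q"
  proof safe
    fix n assume n: "n \<in> {0..<int q}" "coprime n (int q)"
    then have "n \<noteq> 0"
      using assms by auto
    moreover have "coprime (nat n) q"
      using n by (metis atLeastLessThan_iff coprime_int_iff int_nat_eq)
    ultimately have "nat n \<in> totatives q"
      using n by (auto simp: totatives_def)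
    then show "n \<in> int ` totatives q"
      using n by (metis atLeastLessThan_iff int_nat_eq image_eqI)
  next
    fix k assume k: "k \<in> totatives q"
    then have "k \<noteq> q"
      using assms by (auto simp: totatives_def)
    then show "int k \<in> {0..<int q}" "coprime (int k) (int q)"
      using k by (auto simp: totatives_def)
  qed
  then show ?thesis
    by (simp add: card_image totient_def)
qed

context
  fixes q :: nat and \<chi> :: "int \<Rightarrow> complex"
  assumes dc: "dirichlet_character q \<chi>" and real: "real_character \<chi>"
begin

lemma sum_progressions_coprime_start:
  assumes "coprime n (int q)"
  shows "(\<Sum>d\<in>{0..<int q}. \<Prod>j<4. \<chi> (n + int j * d)) = (\<Sum>t\<in>{0..<int q}. \<Prod>j<4. \<chi> (1 + int j * t))"
proof -
  define h where "h d = (\<Prod>j<4. \<chi> (n + int j * d))" for d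
  have h_periodic: "h (d mod int q) = h d" for d
    unfolding h_def
    by (intro prod.cong refl dirichlet_character_cong[OF dc] cong_add cong_mult)
       (simp_all add: cong_def)
  have "\<chi> n ^ 4 = 1"
    using real_character_unit[OF dc real assms] by auto
  then have "h (0 + n * t) = (\<Prod>j<4. \<chi> (1 + int j * t))" for t
  proof -
    have "h (0 + n * t) = (\<Prod>j<4. \<chi> n * \<chi> (1 + int j * t))"
    proof (unfold h_def, intro prod.cong refl)
      fix j :: nat
      have "n + int j * (0 + n * t) = n * (1 + int j * t)"
        by (simp add: algebra_simps)
      then show "\<chi> (n + int j * (0 + n * t)) = \<chi> n * \<chi> (1 + int j * t)"
        by (simp add: dirichlet_character_mult[OF dc])
    qed
    also have "\<dots> = \<chi> n ^ 4 * (\<Prod>j<4. \<chi> (1 + int j * t))"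
      by (simp add: prod.distrib)
    finally show ?thesis
      using \<open>\<chi> n ^ 4 = 1\<close> by simp
  qed
  moreover have "(\<Sum>d\<in>{0..<int q}. h d) = (\<Sum>t\<in>{0..<int q}. h (0 + n * t))"
    by (rule sum_periodic_affine_reindex[symmetric])
       (use dirichlet_character_modulus_pos[OF dc] h_periodic assms in auto)
  ultimately show ?thesis
    unfolding h_def by simp
qed

lemma sum_four_term_progressions:
  assumes "q > 1"
  shows "(\<Sum>n\<in>{0..<int q}. \<Sum>d\<in>{0..<int q}. \<Prod>j<4. \<chi> (n + int j * d))
       = of_nat (totient q) * (\<Sum>t\<in>{0..<int q}. \<chi> ((1 + t) * (1 + 2 * t) * (1 + 3 * t)))"
proof -
  define S where "S = (\<Sum>t\<in>{0..<int q}. \<Prod>j<4. \<chi> (1 + int j * t))"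
  have prod4: "(\<Prod>j<4. f j) = f 0 * f 1 * f 2 * f 3" for f :: "nat \<Rightarrow> complex"
    by (simp add: eval_nat_numeral lessThan_Suc mult_ac)
  have "(\<Sum>d\<in>{0..<int q}. \<Prod>j<4. \<chi> (n + int j * d)) = (if coprime n (int q) then S else 0)" for n
  proof (cases "coprime n (int q)")
    case True
    then show ?thesis
      using sum_progressions_coprime_start[OF True] unfolding S_def by simp
  next
    case False
    then have "\<chi> n = 0"
      using dirichlet_character_eq_0_iff[OF dc] by blast
    then show ?thesis
      using False by (simp add: prod4)
  qed
  then have "(\<Sum>n\<in>{0..<int q}. \<Sum>d\<in>{0..<int q}. \<Prod>j<4. \<chi> (n + int j * d))
      = (\<Sum>n\<in>{0..<int q}. if coprime n (int q) then S else 0)"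
    by simp
  also have "\<dots> = (\<Sum>n\<in>{n \<in> {0..<int q}. coprime n (int q)}. S)"
    by (rule sum.inter_filter[symmetric]) simp
  also have "\<dots> = of_nat (totient q) * S"
    using card_coprime_residues[OF assms] by simp
  also have "S = (\<Sum>t\<in>{0..<int q}. \<chi> ((1 + t) * (1 + 2 * t) * (1 + 3 * t)))"
    unfolding S_def
    by (simp add: prod4 dirichlet_character_mult[OF dc] dirichlet_character_one[OF dc] mult_ac)
  finally show ?thesis .
qed

end

lemma prime_factor_gt_3_if_coprime_6:
  fixes q :: nat
  assumes "prime p" "p dvd q" "coprime q 6"
  shows "3 < p"
proof -
  have "\<not> 2 dvd q" "\<not> 3 dvd q"
    using assms(3) coprime_common_divisor_nat[of q 6 2] coprime_common_divisor_nat[of q 6 3] by auto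
  then have "p \<noteq> 2" "p \<noteq> 3"
    using assms(2) by auto
  then show ?thesis
    using prime_ge_2_nat[OF assms(1)] by linarith
qed

lemma sum_cubic_eq_prod_curves:
  assumes prim: "primitive_character q \<chi>" and real: "real_character \<chi>"
    and sqf: "squarefree q" and q6: "coprime q 6" and b: "[2 * b = 1] (mod int q)"
  shows "(\<Sum>t\<in>{0..<int q}. \<chi> ((1 + t) * (1 + 2 * t) * (1 + 3 * t)))
       = (\<Prod>p\<in>prime_factors q. of_int (int (num_points_E p (3 * b ^ 2)) - int p - 1))"
proof -
  have odd: "odd q"
    using q6 coprime_common_divisor_nat[of q 6 2] by auto
  define g where "g p t = (of_int (Legendre ((1 + t) * (1 + 2 * t) * (1 + 3 * t)) (int p)) :: complex)"
    for p :: nat and t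
  have "(\<Sum>t\<in>{0..<int q}. \<chi> ((1 + t) * (1 + 2 * t) * (1 + 3 * t)))
      = (\<Sum>t\<in>{0..<int (\<Prod>(prime_factors q))}. \<Prod>p\<in>prime_factors q. g p t)"
    using real_primitive_character_eq_prod_Legendre[OF prim real sqf odd]
      squarefree_prod_prime_factors[OF sqf] unfolding g_def by simp
  also have "\<dots> = (\<Prod>p\<in>prime_factors q. \<Sum>t\<in>{0..<int p}. g p t)"
  proof (rule sum_prod_periodic_primes)
    show "g p (x mod int p) = g p x" for p x
      unfolding g_def by (intro arg_cong[where f = of_int] Legendre_cong cong_mult cong_add cong_refl)
        (simp_all add: cong_def)
  qed auto
  also have "\<dots> = (\<Prod>p\<in>prime_factors q. of_int (int (num_points_E p (3 * b ^ 2)) - int p - 1))"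
  proof (rule prod.cong[OF refl])
    fix p assume "p \<in> prime_factors q"
    then have p: "prime p" "p dvd q"
      by auto
    have "[2 * b = 1] (mod int p)"
      using b p(2) by (meson cong_dvd_modulus int_dvd_int_iff)
    then have "(\<Sum>t\<in>{0..<int p}. Legendre ((1 + t) * (1 + 2 * t) * (1 + 3 * t)) (int p))
        = int (num_points_E p (3 * b ^ 2)) - int p - 1"
      using sum_Legendre_cubic_eq_num_points[OF p(1) prime_factor_gt_3_if_coprime_6[OF p q6]] by blast
    then show "(\<Sum>t\<in>{0..<int p}. g p t) = of_int (int (num_points_E p (3 * b ^ 2)) - int p - 1)"
      unfolding g_def by (simp only: of_int_sum[symmetric])
  qed
  finally show ?thesis .
qed

section \<open>Vanishing of \<open>\<Xi>\<close> for unequal moduli\<close>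

lemma prime_power_dvd_progression:
  fixes n d :: int
  assumes p: "prime p" and P: "P = int p ^ e" and ik: "i \<noteq> k" "\<bar>int k - int i\<bar> < int p"
    and "P dvd n + int i * d" "P dvd n + int k * d"
  shows "P dvd n + int l * d"
proof -
  have "P dvd (n + int k * d) - (n + int i * d)"
    using assms(5,6) by (rule dvd_diff[rotated])
  then have "P dvd (int k - int i) * d"
    by (simp add: algebra_simps)
  moreover have "\<not> int p dvd int k - int i"
    using ik dvd_imp_le_int[of "int k - int i" "int p"] by auto
  then have "coprime P (int k - int i)"
    using p unfolding P by (simp add: prime_imp_coprime_int)
  ultimately have "P dvd d"
    by (metis coprime_dvd_mult_right_iff)
  then have "P dvd n"
    using assms(5) by (metis dvd_add_left_iff dvd_mult)
  then show ?thesis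
    using \<open>P dvd d\<close> by simp
qed

lemma Xi_tuples_prime_dvd_entry:
  assumes p: "prime p" "p dvd q" "3 < p"
    and apos: "\<forall>j<4. a j > 0" and ikl: "i < 4" "k < 4" "l < 4" "i \<noteq> k"
    and vi: "multiplicity p (a l) < multiplicity p (a i)"
    and vk: "multiplicity p (a l) < multiplicity p (a k)"
    and b: "b \<in> Xi_tuples q a"
  shows "int p dvd b l"
proof -
  define v where "v = multiplicity p (a l)"
  define P where "P = int p ^ Suc v"
  obtain y where y: "a l = p ^ v * y" "\<not> p dvd y"
    using multiplicity_decompose'[of "a l" p] apos ikl p unfolding v_def by auto
  obtain n d where nd: "\<forall>j<4. int (a j) dvd n + int j * d \<and>
                     [(n + int j * d) div int (a j) = b j] (mod int q)"
    using b unfolding Xi_tuples_def by blast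
  have P_dvd: "P dvd n + int j * d" if "j < 4" "Suc v \<le> multiplicity p (a j)" for j
  proof -
    have "P dvd int (a j)"
      unfolding P_def using multiplicity_dvd'[OF that(2)] by (metis of_nat_dvd_iff of_nat_power)
    then show ?thesis
      using nd that(1) dvd_trans by blast
  qed
  have "P dvd n + int l * d"
    by (rule prime_power_dvd_progression[OF p(1) P_def, of i k])
       (use ikl p(3) vi vk P_dvd in \<open>auto simp: v_def\<close>)
  moreover obtain z where z: "n + int l * d = int (a l) * z" "[z = b l] (mod int q)"
    using nd ikl by (metis dvdE apos nonzero_mult_div_cancel_left of_nat_0_less_iff less_irrefl)
  ultimately have "int p ^ v * int p dvd int p ^ v * (int y * z)"
    using y(1) unfolding P_def by (simp add: mult_ac)
  then have "int p dvd int y * z"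
    using p prime_gt_0_nat by (subst (asm) dvd_mult_cancel_left) auto
  then have "int p dvd z"
    using p y(2) by (simp add: prime_dvd_mult_iff)
  then show ?thesis
    using z(2) p(2) by (meson cong_dvd_iff cong_dvd_modulus int_dvd_int_iff)
qed

lemma Xi_eq_0_if_two_larger_valuations:
  assumes dc: "dirichlet_character q \<chi>" and p: "prime p" "p dvd q" "3 < p"
    and apos: "\<forall>j<4. a j > 0" and ikl: "i < 4" "k < 4" "l < 4" "i \<noteq> k"
    and vi: "multiplicity p (a l) < multiplicity p (a i)"
    and vk: "multiplicity p (a l) < multiplicity p (a k)"
  shows "Xi \<chi> q a = 0"
proof -
  have "\<chi> (b l) = 0" if "b \<in> Xi_tuples q a" for b
  proof -
    have "int p dvd b l"
      by (rule Xi_tuples_prime_dvd_entry[OF p apos ikl vi vk that])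
    then have "\<not> coprime (b l) (int q)"
      using p by (metis coprime_common_divisor int_dvd_int_iff not_prime_unit prime_nat_int_transfer)
    then show ?thesis
      using dirichlet_character_eq_0_iff[OF dc] by blast
  qed
  then show ?thesis
    unfolding Xi_eq_sum_Xi_tuples using ikl by (intro sum.neutral ballI prod_zero) auto
qed

text \<open>Replacing \<open>n\<close> by \<open>n + k N\<close> leaves the residues \<open>b\<^sub>i\<close>, \<open>i \<noteq> j\<close>, unchanged and moves
  \<open>b\<^sub>j\<close> by \<open>k s\<close>.\<close>

lemma Xi_tuples_shift:
  assumes apos: "\<forall>i<4. a i > 0" and j: "j < 4"
    and N_dvd: "\<forall>i<4. i \<noteq> j \<longrightarrow> int (a i) * int q dvd N" and N: "N = int (a j) * s"
    and b: "b \<in> Xi_tuples q a"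
  shows "b(j := (b j + k * s) mod int q) \<in> Xi_tuples q a"
proof -
  let ?b' = "b(j := (b j + k * s) mod int q)"
  obtain n d where nd: "\<forall>i<4. int (a i) dvd n + int i * d \<and>
                     [(n + int i * d) div int (a i) = b i] (mod int q)"
    and b_range: "b \<in> {0..<4::nat} \<rightarrow>\<^sub>E {0..<int q}"
    using b unfolding Xi_tuples_def by blast
  have "int (a i) dvd (n + k * N) + int i * d \<and>
        [((n + k * N) + int i * d) div int (a i) = ?b' i] (mod int q)" if i: "i < 4" for i
  proof -
    obtain z where z: "n + int i * d = int (a i) * z" "[z = b i] (mod int q)"
      using nd i apos by (metis dvdE nonzero_mult_div_cancel_left of_nat_0_less_iff less_irrefl)
    show ?thesis
    proof (cases "i = j")
      case True
      have "(n + k * N) + int i * d = int (a i) * (z + k * s)"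
        using z True N by (simp add: algebra_simps)
      moreover have "[z + k * s = b j + k * s] (mod int q)"
        using z(2) True by (intro cong_add cong_refl) simp
      then have "[z + k * s = ?b' i] (mod int q)"
        using True by (simp add: cong_def)
      ultimately show ?thesis
        using apos i by simp
    next
      case False
      then obtain w where "N = int (a i) * int q * w"
        using N_dvd i by (meson dvdE)
      then have "(n + k * N) + int i * d = int (a i) * (z + int q * (k * w))"
        using z by (simp add: algebra_simps)
      moreover have "[z + int q * (k * w) = ?b' i] (mod int q)"
        using z(2) False by (simp add: cong_def)
      ultimately show ?thesis
        using apos i by simp
    qed
  qed
  moreover have "?b' \<in> {0..<4::nat} \<rightarrow>\<^sub>E {0..<int q}"
    using b_range j by (fastforce simp: PiE_def Pi_def extensional_def)
  ultimately show ?thesis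
    unfolding Xi_tuples_def by blast
qed

lemma Xi_shift_invariant:
  assumes dc: "dirichlet_character q \<chi>" and apos: "\<forall>i<4. a i > 0" and j: "j < 4"
    and N_dvd: "\<forall>i<4. i \<noteq> j \<longrightarrow> int (a i) * int q dvd N" and N: "N = int (a j) * s"
  shows "Xi \<chi> q a = (\<Sum>b\<in>Xi_tuples q a. \<chi> (b j + k * s) * (\<Prod>i\<in>{..<4} - {j}. \<chi> (b i)))"
proof -
  define T where "T = Xi_tuples q a"
  define \<tau> where "\<tau> b = b(j := (b j + k * s) mod int q)" for b :: "nat \<Rightarrow> int"
  have inj: "inj_on \<tau> T"
  proof (rule inj_onI)
    fix b b' assume b: "b \<in> T" "b' \<in> T" and eq: "\<tau> b = \<tau> b'"
    have "[b j + k * s = b' j + k * s] (mod int q)"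
      using fun_cong[OF eq, of j] unfolding \<tau>_def cong_def by simp
    then have "[b j = b' j] (mod int q)"
      by (simp add: cong_add_rcancel)
    moreover have "b j \<in> {0..<int q}" "b' j \<in> {0..<int q}"
      using b j unfolding T_def Xi_tuples_def by auto
    ultimately have "b j = b' j"
      by (auto simp: cong_def)
    moreover have "b i = b' i" if "i \<noteq> j" for i
      using fun_cong[OF eq, of i] that unfolding \<tau>_def by simp
    ultimately show "b = b'"
      by (metis ext)
  qed
  have "\<tau> ` T \<subseteq> T"
    using Xi_tuples_shift[OF apos j N_dvd N] unfolding T_def \<tau>_def by blast
  moreover have "finite T"
    unfolding T_def by (rule finite_Xi_tuples)
  ultimately have "\<tau> ` T = T"
    using endo_inj_surj inj by blast
  then have "Xi \<chi> q a = (\<Sum>b\<in>T. \<Prod>i<4. \<chi> (\<tau> b i))"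
    using sum.reindex[OF inj, of "\<lambda>b. \<Prod>i<4. \<chi> (b i)"]
    unfolding Xi_eq_sum_Xi_tuples T_def[symmetric] by simp
  also have "\<dots> = (\<Sum>b\<in>T. \<chi> (b j + k * s) * (\<Prod>i\<in>{..<4} - {j}. \<chi> (b i)))"
    using j unfolding \<tau>_def
    by (intro sum.cong refl) (simp add: prod.remove dirichlet_character_mod[OF dc])
  finally show ?thesis
    unfolding T_def .
qed

lemma unique_max_valuation_common_multiple:
  fixes a :: "nat \<Rightarrow> nat"
  assumes p: "prime p" and apos: "\<forall>i<4. a i > 0" and j: "j < 4"
    and vj: "\<forall>i<4. i \<noteq> j \<longrightarrow> multiplicity p (a i) < multiplicity p (a j)"
  obtains K where "coprime (int K) (int p)" "\<forall>i<4. i \<noteq> j \<longrightarrow> a i * (p * m) dvd a j * (m * K)"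
proof -
  define v where "v i = multiplicity p (a i)" for i
  define y where "y i = a i div p ^ v i" for i
  have a: "a i = p ^ v i * y i" for i
    unfolding y_def v_def by (simp add: multiplicity_dvd)
  have p_y: "\<not> p dvd y i" if "i < 4" for i
  proof -
    have "a i \<noteq> 0" "\<not> is_unit p"
      using apos p that by auto
    then show ?thesis
      unfolding y_def v_def by (rule multiplicity_decompose)
  qed
  define K where "K = (\<Prod>i<4. y i)"
  have "\<not> p dvd K"
    unfolding K_def using p_y prime_dvd_prod_iff[OF _ p] by auto
  then have "coprime (int K) (int p)"
    using p prime_imp_coprime coprime_commute coprime_int_iff by blast
  moreover have "a i * (p * m) dvd a j * (m * K)" if i: "i < 4" "i \<noteq> j" for i
  proof -
    have "p ^ Suc (v i) dvd p ^ v j"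
      using vj i unfolding v_def by (intro le_imp_power_dvd) auto
    moreover have "y i * m dvd y j * (m * K)"
      using i unfolding K_def by (simp add: dvd_prodI mult_dvd_mono)
    ultimately have "p ^ Suc (v i) * (y i * m) dvd p ^ v j * (y j * (m * K))"
      by (rule mult_dvd_mono)
    then show ?thesis
      unfolding a by (simp add: mult_ac)
  qed
  ultimately show ?thesis
    using that by blast
qed

text \<open>Averaging the shift invariance over \<open>k mod p\<close> produces the complete sum
  \<open>\<Sum>\<^sub>k \<chi>(b\<^sub>j + k s)\<close> with \<open>s = (q/p) K\<close>, which vanishes by primitivity because \<open>K\<close> is
  prime to \<open>p\<close>.\<close>

lemma Xi_eq_0_if_unique_max_valuation:
  assumes prim: "primitive_character q \<chi>" and p: "prime p" "p dvd q"
    and apos: "\<forall>i<4. a i > 0" and j: "j < 4"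
    and vj: "\<forall>i<4. i \<noteq> j \<longrightarrow> multiplicity p (a i) < multiplicity p (a j)"
  shows "Xi \<chi> q a = 0"
proof -
  have dc: "dirichlet_character q \<chi>"
    using prim by (rule primitive_character_imp_dirichlet_character)
  define m where "m = q div p"
  have q: "q = p * m"
    unfolding m_def using p(2) by simp
  obtain K where K: "coprime (int K) (int p)" "\<forall>i<4. i \<noteq> j \<longrightarrow> a i * (p * m) dvd a j * (m * K)"
    using unique_max_valuation_common_multiple[OF p(1) apos j vj] .
  define s where "s = int (m * K)"
  have N_dvd: "\<forall>i<4. i \<noteq> j \<longrightarrow> int (a i) * int q dvd int (a j) * s"
    using K(2) unfolding s_def q by (metis of_nat_dvd_iff of_nat_mult)
  define R where "R b = (\<Prod>i\<in>{..<4} - {j}. \<chi> (b i))" for b :: "nat \<Rightarrow> int"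
  have "of_int (int p) * Xi \<chi> q a
      = (\<Sum>k\<in>{0..<int p}. \<Sum>b\<in>Xi_tuples q a. \<chi> (b j + k * s) * R b)"
    using Xi_shift_invariant[OF dc apos j N_dvd refl] unfolding R_def by simp
  also have "\<dots> = (\<Sum>b\<in>Xi_tuples q a. (\<Sum>k\<in>{0..<int p}. \<chi> (b j + k * s)) * R b)"
    by (subst sum.swap) (simp add: sum_distrib_right)
  also have "\<dots> = 0"
    unfolding s_def using primitive_character_sum_progression_mult[OF prim p(1) q K(1)] by simp
  finally show ?thesis
    using p(1) prime_gt_0_nat by simp
qed

lemma prime_dvd_rad:
  assumes "prime r" "r dvd x" "x > 0"
  shows "r dvd rad x"
proof -
  have "r \<in> prime_factors x"
    using assms by (auto simp: in_prime_factors_iff)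
  then show ?thesis
    unfolding rad_def using dvd_prodI[of "prime_factors x" r "\<lambda>p. p"] by simp
qed

lemma Xi_eq_0_if_unequal_moduli:
  assumes prim: "primitive_character q \<chi>" and q6: "coprime q 6"
    and a: "\<forall>j<4. a j > 0 \<and> rad (a j) dvd q"
    and ne: "i0 < 4" "k0 < 4" "a i0 \<noteq> a k0"
  shows "Xi \<chi> q a = 0"
proof -
  have apos: "\<forall>j<4. a j > 0"
    using a by blast
  obtain p where p: "prime p" "multiplicity p (a i0) \<noteq> multiplicity p (a k0)"
    using multiplicity_eq_imp_eq[of "a i0" "a k0"] apos ne by fastforce
  define v where "v i = multiplicity p (a i)" for i
  obtain i where i: "i < 4" "p dvd a i"
    using p(2) ne by (metis not_dvd_imp_multiplicity_0)
  then have "p dvd q"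
    using a p(1) prime_dvd_rad dvd_trans by blast
  then have "3 < p"
    using prime_factor_gt_3_if_coprime_6[OF p(1) _ q6] by blast
  obtain j where j: "j < 4" "\<forall>i<4. v i \<le> v j"
    using Max_in[of "v ` {..<4}"] Max_ge[of "v ` {..<4}"] by fastforce
  show ?thesis
  proof (cases "\<forall>i<4. i \<noteq> j \<longrightarrow> v i < v j")
    case True
    then show ?thesis
      using Xi_eq_0_if_unique_max_valuation[OF prim p(1) \<open>p dvd q\<close> apos j(1)] v_def by simp
  next
    case False
    then obtain k where k: "k < 4" "k \<noteq> j" "v k = v j"
      using j by force
    obtain l where "l < 4" "v l < v j"
      using p(2) ne j unfolding v_def by (metis nat_neq_iff order.strict_trans2)
    then show ?thesis
      using Xi_eq_0_if_two_larger_valuations[OF _ p(1) \<open>p dvd q\<close> \<open>3 < p\<close> apos j(1) k(1) _ k(2)[symmetric]]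
        primitive_character_imp_dirichlet_character[OF prim] k v_def by simp
  qed
qed

lemma Xi_equal_moduli_eq_prod_curves:
  assumes prim: "primitive_character q \<chi>" and real: "real_character \<chi>"
    and q: "q > 1" "coprime q 6" and a: "\<forall>j<4. a j = a0" "a0 > 0"
    and b: "[2 * b = 1] (mod int q)"
  shows "Xi \<chi> q a = of_int (moebius q) * of_nat (totient q) *
           (\<Prod>p \<in> {p. prime p \<and> p dvd q \<and> \<not> p^2 dvd q}.
              (of_int (int p + 1 - int (num_points_E p (3 * b^2))) :: complex))"
proof -
  have dc: "dirichlet_character q \<chi>"
    using prim by (rule primitive_character_imp_dirichlet_character)
  have "odd q"
    using q(2) coprime_common_divisor_nat[of q 6 2] by auto
  then have sqf: "squarefree q"
    using primitive_real_character_squarefree[OF prim real] by blast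
  define P where "P = prime_factors q"
  define e where "e p = (of_int (int p + 1 - int (num_points_E p (3 * b ^ 2))) :: complex)" for p
  have "Xi \<chi> q a = of_nat (totient q) * (\<Sum>t\<in>{0..<int q}. \<chi> ((1 + t) * (1 + 2 * t) * (1 + 3 * t)))"
    using Xi_equal_moduli[OF dc a] sum_four_term_progressions[OF dc real q(1)] by simp
  also have "\<dots> = of_nat (totient q) * (\<Prod>p\<in>P. - e p)"
    using sum_cubic_eq_prod_curves[OF prim real sqf q(2) b] unfolding P_def e_def
    by (simp add: algebra_simps)
  also have "\<dots> = of_int (moebius q) * of_nat (totient q) * (\<Prod>p\<in>P. e p)"
    using sqf unfolding moebius_def P_def by (simp add: prod_uminus)
  also have "P = {p. prime p \<and> p dvd q \<and> \<not> p ^ 2 dvd q}"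
    using sqf q(1) unfolding P_def by (auto simp: in_prime_factors_iff squarefree_factorial_semiring)
  finally show ?thesis
    unfolding e_def .
qed

theorem lemma6p1:
  fixes q :: nat and \<chi> :: "int \<Rightarrow> complex" and a :: "nat \<Rightarrow> nat"
  assumes "q \<ge> 5" and "coprime q 6"
    and "primitive_character q \<chi>" and "real_character \<chi>"
    and "\<forall>j<4. a j > 0 \<and> rad (a j) dvd q"
  shows "(\<not> (a 0 = a 1 \<and> a 1 = a 2 \<and> a 2 = a 3) \<longrightarrow> Xi \<chi> q a = 0) \<and>
         (a 0 = a 1 \<and> a 1 = a 2 \<and> a 2 = a 3 \<longrightarrow>
            (\<forall>b::int. [2 * b = 1] (mod int q) \<longrightarrow>
               Xi \<chi> q a = of_int (moebius q) * of_nat (totient q) *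
                 (\<Prod>p \<in> {p. prime p \<and> p dvd q \<and> \<not> p^2 dvd q}.
                    (of_int (int p + 1 - int (num_points_E p (3 * b^2))) :: complex))))"
proof (intro conjI impI allI)
  assume "\<not> (a 0 = a 1 \<and> a 1 = a 2 \<and> a 2 = a 3)"
  then have "a 1 \<noteq> a 0 \<or> a 2 \<noteq> a 0 \<or> a 3 \<noteq> a 0"
    by auto
  then show "Xi \<chi> q a = 0"
    using Xi_eq_0_if_unequal_moduli[OF assms(3,2,5), of 1 0]
      Xi_eq_0_if_unequal_moduli[OF assms(3,2,5), of 2 0]
      Xi_eq_0_if_unequal_moduli[OF assms(3,2,5), of 3 0] by auto
next
  fix b :: int
  assume "a 0 = a 1 \<and> a 1 = a 2 \<and> a 2 = a 3" and b: "[2 * b = 1] (mod int q)"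
  then have a: "\<forall>j<4. a j = a 0"
    by (auto simp: less_Suc_eq eval_nat_numeral)
  have "q > 1" "a 0 > 0"
    using assms(1,5) by auto
  then show "Xi \<chi> q a = of_int (moebius q) * of_nat (totient q) *
      (\<Prod>p \<in> {p. prime p \<and> p dvd q \<and> \<not> p^2 dvd q}.
         (of_int (int p + 1 - int (num_points_E p (3 * b^2))) :: complex))"
    using Xi_equal_moduli_eq_prod_curves[OF assms(3,4) _ assms(2) a _ b] by blast
qed

end
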